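(* Let $\xi:[0,\ell)\to\mathbb{R}^n$ be a self-contracted curve. Then for every $\tau\in[0,\ell)$ and all $t_1,t_2\in(\tau,\ell)$ with $\xi(t_1)\neq\xi(\tau)$ and $\xi(t_2)\neq\xi(\tau)$, $$\angle\big(\xi(t_1)-\xi(\tau),\,\xi(t_2)-\xi(\tau)\big)<\frac{\pi}{2},$$ where $\angle(v,w)\in[0,\pi]$ denotes the Euclidean angle between nonzero vectors $v,w$.
   Context: Let $(X,d)$ be a metric space and $\ell\in(0,\infty]$. A map $\xi:[0,\ell)\to X$ (not necessarily continuous) is called self-contracted if $d(\xi(t_2),\xi(t_3))\le d(\xi(t_1),\xi(t_3))$ for all $0\le t_1\le t_2\le t_3<\ell$. Here $X=\mathbb{R}^n$ with the Euclidean distance. *)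

theory Defs
  imports "HOL-Analysis.Analysis"
begin

definition self_contracted :: "ereal \<Rightarrow> (real \<Rightarrow> 'a::metric_space) \<Rightarrow> bool" where
  "self_contracted l xi \<longleftrightarrow>
     (\<forall>t1 t2 t3. 0 \<le> t1 \<and> t1 \<le> t2 \<and> t2 \<le> t3 \<and> ereal t3 < l \<longrightarrow>
        dist (xi t2) (xi t3) \<le> dist (xi t1) (xi t3))"

definition vec_angle :: "'a::real_inner \<Rightarrow> 'a \<Rightarrow> real" where
  "vec_angle v w = arccos (inner v w / (norm v * norm w))"

end

theory Submission
  imports Defs
begin

text \<open>If \<open>y\<^sub>1\<close> is at least as close to \<open>y\<^sub>2\<close> as \<open>x\<close> is, then expanding
  \<open>\<parallel>b - a\<parallel>\<^sup>2 \<le> \<parallel>b\<parallel>\<^sup>2\<close> for \<open>a = y\<^sub>1 - x\<close>, \<open>b = y\<^sub>2 - x\<close> gives \<open>2\<langle>a,b\<rangle> \<ge> \<parallel>a\<parallel>\<^sup>2 > 0\<close>.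
  Applied with \<open>x = \<xi>(\<tau>)\<close>, \<open>y\<^sub>1 = \<xi>(t\<^sub>1)\<close>, \<open>y\<^sub>2 = \<xi>(t\<^sub>2)\<close> for \<open>\<tau> < t\<^sub>1 \<le> t\<^sub>2\<close>,
  self-contractedness makes the angle at \<open>\<xi>(\<tau>)\<close> acute.\<close>

lemma inner_pos_if_dist_le:
  fixes x y1 y2 :: "'a::real_inner"
  assumes "dist y1 y2 \<le> dist x y2" and "y1 \<noteq> x"
  shows "0 < inner (y1 - x) (y2 - x)"
proof -
  define a where "a = y1 - x"
  define b where "b = y2 - x"
  have "norm (b - a) \<le> norm b"
    using assms(1) by (simp add: a_def b_def dist_norm norm_minus_commute)
  then have "(norm (b - a))\<^sup>2 \<le> (norm b)\<^sup>2"
    by (simp add: power_mono)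
  then have "inner b b - 2 * inner a b + inner a a \<le> inner b b"
    by (simp add: power2_norm_eq_inner inner_diff inner_commute)
  moreover have "0 < inner a a"
    using assms(2) by (simp add: a_def)
  ultimately show ?thesis
    unfolding a_def b_def by linarith
qed

lemma vec_angle_less_pi_half:
  fixes v w :: "'a::real_inner"
  assumes "0 < inner v w"
  shows "vec_angle v w < pi / 2"
proof -
  have "v \<noteq> 0" "w \<noteq> 0"
    using assms by auto
  then have norms_pos: "0 < norm v * norm w"
    by simp
  have "inner v w / (norm v * norm w) \<le> 1"
    using Cauchy_Schwarz_ineq2[of v w] norms_pos by simp
  moreover have "0 < inner v w / (norm v * norm w)"
    using assms norms_pos by simp
  ultimately have "arccos (inner v w / (norm v * norm w)) < arccos 0"
    by (intro arccos_less_arccos) auto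
  then show ?thesis
    by (simp add: vec_angle_def)
qed

lemma self_contracted_inner_pos:
  fixes xi :: "real \<Rightarrow> 'a::real_inner"
  assumes "self_contracted l xi" and "0 \<le> \<tau>"
    and "\<tau> < t1" and "ereal t1 < l" and "\<tau> < t2" and "ereal t2 < l"
    and "xi t1 \<noteq> xi \<tau>" and "xi t2 \<noteq> xi \<tau>"
  shows "0 < inner (xi t1 - xi \<tau>) (xi t2 - xi \<tau>)"
proof (cases "t1 \<le> t2")
  case True
  then have "dist (xi t1) (xi t2) \<le> dist (xi \<tau>) (xi t2)"
    using assms unfolding self_contracted_def by auto
  then show ?thesis
    using inner_pos_if_dist_le assms(7) by blast
next
  case False
  then have "dist (xi t2) (xi t1) \<le> dist (xi \<tau>) (xi t1)"
    using assms unfolding self_contracted_def by auto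
  then have "0 < inner (xi t2 - xi \<tau>) (xi t1 - xi \<tau>)"
    using inner_pos_if_dist_le assms(8) by blast
  then show ?thesis
    by (simp add: inner_commute)
qed

theorem mainTheorem2:
  fixes l :: ereal and xi :: "real \<Rightarrow> real ^ 'n"
  assumes "0 < l"
    and "self_contracted l xi"
    and "0 \<le> \<tau>" and "ereal \<tau> < l"
    and "\<tau> < t1" and "ereal t1 < l"
    and "\<tau> < t2" and "ereal t2 < l"
    and "xi t1 \<noteq> xi \<tau>" and "xi t2 \<noteq> xi \<tau>"
  shows "vec_angle (xi t1 - xi \<tau>) (xi t2 - xi \<tau>) < pi / 2"
  using self_contracted_inner_pos[OF assms(2,3,5-10)]
  by (rule vec_angle_less_pi_half)

end
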